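(* Fix $\theta$ with $\phi(\theta)<\beta$. Then $s_1(\theta,\tau^\star(\theta))<\beta$ if and only if $\tau_1^d(\theta)>\tau_2^d(\theta)$. Consequently $s_1(\theta,\tau^\star(\theta))>\beta$ if and only if $\tau_1^d(\theta)<\tau_2^d(\theta)$.
   Context: Setup. Let $Q\in\{0,1\}$ be a random variable with $\mathbb P(Q=1)=\pi\in(0,1)$, and let $(\Theta,\Gamma)$ be a real-valued random vector whose conditional joint density given $Q=1$ is $h_q$ and given $Q=0$ is $h_u$, both strictly positive on $\mathbb R^2$. Monotone likelihood ratio assumption: $l(\theta,\gamma)=h_q(\theta,\gamma)/h_u(\theta,\gamma)$ is continuous and strictly increasing in each of $\theta$ and $\gamma$, and for each $\theta$ the map $\gamma\mapsto l(\theta,\gamma)$ has infimum $0$ and supremum $+\infty$. Fix payoffs $x_q>0$, $x_u>0$. For $\tau\in(-x_u,x_q)$ let $A(\tau)=\mathbb 1\{l(\Theta,\Gamma)>\frac{(1-\pi)(x_u+\tau)}{\pi(x_q-\tau)}\}$, $s_1(\theta,\tau)=\mathbb E[Q\mid\Theta=\theta,A(\tau)=1]$, $s_2(\theta,\tau)=\mathbb E[A(\tau)\mid\Theta=\theta]$, $\phi(\theta)=\mathbb P(Q=1\mid\Theta=\theta)$. The equalizing prejudice $\tau^\star(\theta)$ is the unique $\tau\in(-x_u,x_q)$ with $s_1(\theta,\tau)=s_2(\theta,\tau)$. Fix a cutoff $c\in(-x_u,x_q)$ and let $\beta=(x_u+c)/(x_q+x_u)\in(0,1)$. The critical prejudice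 $\tau_k^d(\theta)$, $k=1,2$, is the unique $\tau\in(-x_u,x_q)$ with $s_k(\theta,\tau)=\beta$ (it exists for $k=1$ when $\phi(\theta)<\beta$, and always for $k=2$). *)

theory Defs
  imports "HOL-Analysis.Analysis"
begin

text \<open>Conditional densities: hq (given Q=1), hu (given Q=0) of (Theta, Gamma),
  written curried as h theta gamma. p is pi = P(Q=1).\<close>

definition lr :: "(real \<Rightarrow> real \<Rightarrow> real) \<Rightarrow> (real \<Rightarrow> real \<Rightarrow> real) \<Rightarrow> real \<Rightarrow> real \<Rightarrow> real" where
  "lr hq hu \<theta> \<gamma> = hq \<theta> \<gamma> / hu \<theta> \<gamma>"

definition thr :: "real \<Rightarrow> real \<Rightarrow> real \<Rightarrow> real \<Rightarrow> real" where
  "thr p xq xu \<tau> = (1 - p) * (xu + \<tau>) / (p * (xq - \<tau>))"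

definition accSet :: "(real \<Rightarrow> real \<Rightarrow> real) \<Rightarrow> (real \<Rightarrow> real \<Rightarrow> real) \<Rightarrow> real \<Rightarrow> real \<Rightarrow> real \<Rightarrow> real \<Rightarrow> real \<Rightarrow> real set" where
  "accSet hq hu p xq xu \<theta> \<tau> = {\<gamma>. lr hq hu \<theta> \<gamma> > thr p xq xu \<tau>}"

definition secm :: "(real \<Rightarrow> real \<Rightarrow> real) \<Rightarrow> real \<Rightarrow> real set \<Rightarrow> real" where
  "secm h \<theta> S = (\<integral>\<gamma>. indicator S \<gamma> * h \<theta> \<gamma> \<partial>lborel)"

text \<open>phi(theta) = P(Q=1 | Theta=theta).\<close>
definition phi :: "(real \<Rightarrow> real \<Rightarrow> real) \<Rightarrow> (real \<Rightarrow> real \<Rightarrow> real) \<Rightarrow> real \<Rightarrow> real \<Rightarrow> real" where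
  "phi hq hu p \<theta> = p * secm hq \<theta> UNIV / (p * secm hq \<theta> UNIV + (1 - p) * secm hu \<theta> UNIV)"

text \<open>s1(theta,tau) = E[Q | Theta=theta, A(tau)=1].\<close>
definition s1 :: "(real \<Rightarrow> real \<Rightarrow> real) \<Rightarrow> (real \<Rightarrow> real \<Rightarrow> real) \<Rightarrow> real \<Rightarrow> real \<Rightarrow> real \<Rightarrow> real \<Rightarrow> real \<Rightarrow> real" where
  "s1 hq hu p xq xu \<theta> \<tau> =
     (let A = accSet hq hu p xq xu \<theta> \<tau> in
      p * secm hq \<theta> A / (p * secm hq \<theta> A + (1 - p) * secm hu \<theta> A))"

text \<open>s2(theta,tau) = E[A(tau) | Theta=theta].\<close>
definition s2 :: "(real \<Rightarrow> real \<Rightarrow> real) \<Rightarrow> (real \<Rightarrow> real \<Rightarrow> real) \<Rightarrow> real \<Rightarrow> real \<Rightarrow> real \<Rightarrow> real \<Rightarrow> real \<Rightarrow> real" where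
  "s2 hq hu p xq xu \<theta> \<tau> =
     (let A = accSet hq hu p xq xu \<theta> \<tau> in
      (p * secm hq \<theta> A + (1 - p) * secm hu \<theta> A) /
      (p * secm hq \<theta> UNIV + (1 - p) * secm hu \<theta> UNIV))"

definition tau_star :: "(real \<Rightarrow> real \<Rightarrow> real) \<Rightarrow> (real \<Rightarrow> real \<Rightarrow> real) \<Rightarrow> real \<Rightarrow> real \<Rightarrow> real \<Rightarrow> real \<Rightarrow> real" where
  "tau_star hq hu p xq xu \<theta> =
     (THE \<tau>. \<tau> \<in> {-xu<..<xq} \<and> s1 hq hu p xq xu \<theta> \<tau> = s2 hq hu p xq xu \<theta> \<tau>)"

definition tau_d1 :: "(real \<Rightarrow> real \<Rightarrow> real) \<Rightarrow> (real \<Rightarrow> real \<Rightarrow> real) \<Rightarrow> real \<Rightarrow> real \<Rightarrow> real \<Rightarrow> real \<Rightarrow> real \<Rightarrow> real" where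
  "tau_d1 hq hu p xq xu \<beta> \<theta> =
     (THE \<tau>. \<tau> \<in> {-xu<..<xq} \<and> s1 hq hu p xq xu \<theta> \<tau> = \<beta>)"

definition tau_d2 :: "(real \<Rightarrow> real \<Rightarrow> real) \<Rightarrow> (real \<Rightarrow> real \<Rightarrow> real) \<Rightarrow> real \<Rightarrow> real \<Rightarrow> real \<Rightarrow> real \<Rightarrow> real \<Rightarrow> real" where
  "tau_d2 hq hu p xq xu \<beta> \<theta> =
     (THE \<tau>. \<tau> \<in> {-xu<..<xq} \<and> s2 hq hu p xq xu \<theta> \<tau> = \<beta>)"

end

theory Submission
  imports Defs "HOL-Probability.Distribution_Functions"
begin

text \<open>
  Only the section at the fixed \<open>\<theta>\<close> matters. Since the likelihood ratio is continuous and
  strictly increasing in \<open>\<gamma>\<close> with range \<open>(0, \<infinity>)\<close>, every acceptance set \<open>A(\<tau>)\<close> is an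
  upper ray \<open>{\<gamma>. a < \<gamma>}\<close> whose cutoff \<open>a\<close> increases with \<open>\<tau>\<close>. The monotone likelihood ratio
  passes to the upper tails, so the share \<open>s\<^sub>1\<close> of qualified candidates among the accepted
  strictly increases with the cutoff, while the acceptance rate \<open>s\<^sub>2\<close> strictly decreases.
  Thus \<open>\<tau>\<^sup>\<star>\<close> is the crossing of an increasing and a decreasing curve and \<open>\<tau>\<^sub>1\<^sup>d\<close>, \<open>\<tau>\<^sub>2\<^sup>d\<close>
  are their \<open>\<beta>\<close>-level points; a crossing below level \<open>\<beta>\<close> lies to the left of \<open>\<tau>\<^sub>1\<^sup>d\<close> and to
  the right of \<open>\<tau>\<^sub>2\<^sup>d\<close>, and one at or above level \<open>\<beta>\<close> does not lie strictly between them.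
  All three points exist by the intermediate value theorem: as the cutoff tends to \<open>-\<infinity>\<close>,
  \<open>s\<^sub>1 \<rightarrow> \<phi>(\<theta>)\<close> and \<open>s\<^sub>2 \<rightarrow> 1\<close>; as it tends to \<open>+\<infinity>\<close>, \<open>s\<^sub>1 \<rightarrow> 1\<close> and \<open>s\<^sub>2 \<rightarrow> 0\<close>.
\<close>

lemma continuous_on_section:
  fixes h :: "'a::topological_space \<Rightarrow> 'b::topological_space \<Rightarrow> 'c::topological_space"
  assumes "continuous_on UNIV (\<lambda>(t, x). h t x)"
  shows "continuous_on UNIV (h t)"
  using continuous_on_compose2[OF assms continuous_on_Pair[OF continuous_on_const continuous_on_id]]
  by simp

lemma continuous_on_UNIV_attains:
  fixes f :: "real \<Rightarrow> real"
  assumes "continuous_on UNIV f" "f a \<le> y" "y \<le> f b"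
  shows "\<exists>x. f x = y"
  using connectedD_interval[OF connected_continuous_image[OF assms(1) connected_UNIV], of "f a" "f b" y]
    assms(2,3) by auto

lemma continuous_on_UNIV_attains_between_limits:
  fixes f :: "real \<Rightarrow> real"
  assumes cont: "continuous_on UNIV f"
    and bot: "(f \<longlongrightarrow> l) at_bot" and top: "(f \<longlongrightarrow> m) at_top"
    and y: "min l m < y" "y < max l m"
  shows "\<exists>x. f x = y"
proof -
  have "(\<forall>\<^sub>F x in at_bot. f x < y) \<or> (\<forall>\<^sub>F x in at_top. f x < y)"
    using y order_tendstoD(2)[OF bot] order_tendstoD(2)[OF top] by (cases "l < y") auto
  then obtain a where "f a < y"
    by (auto simp: eventually_at_bot_linorder eventually_at_top_linorder)
  moreover have "(\<forall>\<^sub>F x in at_bot. y < f x) \<or> (\<forall>\<^sub>F x in at_top. y < f x)"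
    using y order_tendstoD(1)[OF bot] order_tendstoD(1)[OF top] by (cases "y < l") auto
  then obtain b where "y < f b"
    by (auto simp: eventually_at_bot_linorder eventually_at_top_linorder)
  ultimately show ?thesis
    using continuous_on_UNIV_attains[OF cont, of a y b] by simp
qed

lemma strict_mono_antimono_crossing:
  fixes f g :: "'a::linorder \<Rightarrow> 'b::linorder"
  assumes f: "strict_mono_on I f" and g: "strict_antimono_on I g"
    and cross: "\<exists>x\<in>I. f x = g x" and level_f: "\<exists>x\<in>I. f x = b" and level_g: "\<exists>x\<in>I. g x = b"
  defines "t \<equiv> THE x. x \<in> I \<and> f x = g x"
    and "t\<^sub>f \<equiv> THE x. x \<in> I \<and> f x = b" and "t\<^sub>g \<equiv> THE x. x \<in> I \<and> g x = b"
  shows "f t < b \<longleftrightarrow> t\<^sub>g < t\<^sub>f" and "b < f t \<longleftrightarrow> t\<^sub>f < t\<^sub>g"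
proof -
  have f_less: "f x < f y \<longleftrightarrow> x < y" if "x \<in> I" "y \<in> I" for x y
    using strict_mono_on_less[OF f that] .
  have g_less: "g x < g y \<longleftrightarrow> y < x" if "x \<in> I" "y \<in> I" for x y
    using that monotone_onD[OF g, of x y] monotone_onD[OF g, of y x]
    by (cases x y rule: linorder_cases) auto
  have unique: "(THE x. x \<in> I \<and> P x) = y"
    if "y \<in> I" "P y" "\<And>x z. x \<in> I \<Longrightarrow> z \<in> I \<Longrightarrow> P x \<Longrightarrow> P z \<Longrightarrow> \<not> x < z" for P y
    using that by (intro the_equality) (blast, metis linorder_neqE)
  obtain s where s: "s \<in> I" "f s = g s" using cross by blast
  obtain s\<^sub>f where s\<^sub>f: "s\<^sub>f \<in> I" "f s\<^sub>f = b" using level_f by blast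
  obtain s\<^sub>g where s\<^sub>g: "s\<^sub>g \<in> I" "g s\<^sub>g = b" using level_g by blast
  have "t = s" unfolding t_def
    by (rule unique[where P = "\<lambda>x. f x = g x", OF s]) (metis f_less g_less order.asym)
  moreover have "t\<^sub>f = s\<^sub>f" unfolding t\<^sub>f_def
    by (rule unique[where P = "\<lambda>x. f x = b", OF s\<^sub>f]) (metis f_less order.irrefl)
  moreover have "t\<^sub>g = s\<^sub>g" unfolding t\<^sub>g_def
    by (rule unique[where P = "\<lambda>x. g x = b", OF s\<^sub>g]) (metis g_less order.irrefl)
  ultimately show "f t < b \<longleftrightarrow> t\<^sub>g < t\<^sub>f" and "b < f t \<longleftrightarrow> t\<^sub>f < t\<^sub>g"
    using f_less[OF s(1) s\<^sub>f(1)] f_less[OF s\<^sub>f(1) s(1)] g_less[OF s(1) s\<^sub>g(1)] g_less[OF s\<^sub>g(1) s(1)]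
      s(2) s\<^sub>f(2) s\<^sub>g(2) by (metis not_less_iff_gr_or_eq order.strict_trans)+
qed

lemma integral_pos_if_pos_on:
  fixes f :: "'a \<Rightarrow> real"
  assumes "integrable M f" and "\<And>x. 0 \<le> f x"
    and "S \<in> sets M" "emeasure M S \<noteq> 0" and "\<And>x. x \<in> S \<Longrightarrow> 0 < f x"
  shows "0 < integral\<^sup>L M f"
proof (rule ccontr)
  assume "\<not> 0 < integral\<^sup>L M f"
  with assms(2) have "integral\<^sup>L M f = 0"
    by (simp add: integral_nonneg_AE order.antisym)
  then have "AE x in M. f x = 0"
    using integral_nonneg_eq_0_iff_AE[OF assms(1)] assms(2) by simp
  then have "AE x in M. x \<notin> S"
    by eventually_elim (use assms(5) in force)
  with assms(3,4) show False
    by (simp add: AE_iff_null_sets[symmetric] null_sets_def)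
qed

lemma
  fixes f :: "real \<Rightarrow> real"
  assumes f: "integrable lborel f" "\<And>x. 0 \<le> f x"
  shows finite_borel_measure_density: "finite_borel_measure (density lborel f)"
    and measure_density_eq_integral:
      "S \<in> sets borel \<Longrightarrow> measure (density lborel f) S = (\<integral>x. indicator S x * f x \<partial>lborel)"
proof -
  have emeasure: "emeasure (density lborel f) S = ennreal (\<integral>x. indicator S x * f x \<partial>lborel)"
    if S: "S \<in> sets borel" for S
  proof -
    have "emeasure (density lborel f) S = (\<integral>\<^sup>+ x. ennreal (indicator S x * f x) \<partial>lborel)"
      using S f by (subst emeasure_density) (auto intro!: nn_integral_cong split: split_indicator)
    also have "\<dots> = ennreal (\<integral>x. indicator S x * f x \<partial>lborel)"
      using S f integrable_mult_indicator[of S lborel f] by (intro nn_integral_eq_integral) auto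
    finally show ?thesis .
  qed
  have "finite_measure (density lborel f)"
    using emeasure[of UNIV] by (intro finite_measureI) simp
  then show "finite_borel_measure (density lborel f)"
    by (simp add: finite_borel_measure_def finite_borel_measure_axioms_def)
  show "measure (density lborel f) S = (\<integral>x. indicator S x * f x \<partial>lborel)" if "S \<in> sets borel"
    using emeasure[OF that] f(2) by (simp add: measure_def integral_nonneg_AE)
qed

definition upper_tail :: "(real \<Rightarrow> real) \<Rightarrow> real \<Rightarrow> real" where
  "upper_tail f a = (\<integral>x. indicator {a<..} x * f x \<partial>lborel)"

context
  fixes f :: "real \<Rightarrow> real"
  assumes f_int: "integrable lborel f" and f_nonneg: "\<And>x. 0 \<le> f x"
begin

interpretation finite_borel_measure "density lborel f"
  using finite_borel_measure_density[OF f_int f_nonneg] .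

lemma upper_tail_eq_cdf: "upper_tail f a = integral\<^sup>L lborel f - cdf (density lborel f) a"
proof -
  have "upper_tail f a = measure (density lborel f) (UNIV - {..a})"
    unfolding upper_tail_def
    by (subst measure_density_eq_integral[OF f_int f_nonneg]) (auto simp: Compl_eq_Diff_UNIV[symmetric])
  also have "\<dots> = measure (density lborel f) UNIV - measure (density lborel f) {..a}"
    using finite_measure_compl[of "{..a}"] by simp
  finally show ?thesis
    using measure_density_eq_integral[OF f_int f_nonneg, of UNIV] by (simp add: cdf_def)
qed

lemma isCont_upper_tail: "isCont (upper_tail f) a"
proof -
  have "measure (density lborel f) {x} = 0" for x
    using measure_density_eq_integral[OF f_int f_nonneg, of "{x}"] AE_lborel_singleton[of x]
    by (auto intro!: integral_eq_zero_AE elim!: eventually_mono)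
  then show ?thesis
    unfolding upper_tail_eq_cdf[abs_def] by (intro continuous_intros) (simp add: isCont_cdf)
qed

lemma upper_tail_at_bot: "(upper_tail f \<longlongrightarrow> integral\<^sup>L lborel f) at_bot"
  unfolding upper_tail_eq_cdf[abs_def] using tendsto_diff[OF tendsto_const cdf_lim_at_bot] by simp

lemma upper_tail_at_top: "(upper_tail f \<longlongrightarrow> 0) at_top"
  unfolding upper_tail_eq_cdf[abs_def]
  using tendsto_diff[OF tendsto_const cdf_lim_at_top, of "integral\<^sup>L lborel f"]
    measure_density_eq_integral[OF f_int f_nonneg, of UNIV]
  by simp

end

lemma upper_tail_split:
  fixes f :: "real \<Rightarrow> real"
  assumes "integrable lborel f" "a \<le> b"
  shows "upper_tail f a = upper_tail f b + (\<integral>x. indicator {a<..b} x * f x \<partial>lborel)"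
proof -
  have split: "indicator {a<..} x = (indicator {b<..} x + indicator {a<..b} x :: real)" for x
    using assms(2) by (auto simp: indicator_def)
  have "integrable lborel (\<lambda>x. indicator S x * f x)" if "S \<in> sets borel" for S
    using integrable_mult_indicator[OF _ assms(1), of S] that by simp
  then show ?thesis
    unfolding upper_tail_def split distrib_right by (intro Bochner_Integration.integral_add) auto
qed

context
  fixes f :: "real \<Rightarrow> real"
  assumes f_int: "integrable lborel f" and f_pos: "\<And>x. 0 < f x"
begin

lemma integral_Ioc_pos: "a < b \<Longrightarrow> 0 < (\<integral>x. indicator {a<..b} x * f x \<partial>lborel)"
  using f_int f_pos integrable_mult_indicator[of "{a<..b}" lborel f]
  by (intro integral_pos_if_pos_on[where S = "{a<..b}"]) (auto simp: less_imp_le)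

lemma integral_pos: "0 < integral\<^sup>L lborel f"
  using f_int f_pos by (intro integral_pos_if_pos_on[where S = UNIV]) (auto simp: less_imp_le)

lemma upper_tail_pos: "0 < upper_tail f a"
proof -
  have "0 < (\<integral>x. indicator {a<..a+1} x * f x \<partial>lborel)"
    by (rule integral_Ioc_pos) simp
  moreover have "0 \<le> upper_tail f (a + 1)"
    unfolding upper_tail_def using f_pos by (intro integral_nonneg_AE) (simp add: less_imp_le)
  ultimately show ?thesis
    using upper_tail_split[OF f_int, of a "a + 1"] by simp
qed

lemma upper_tail_strict_antimono: "a < b \<Longrightarrow> upper_tail f b < upper_tail f a"
  using upper_tail_split[OF f_int, of a b] integral_Ioc_pos[of a b] by simp

end

locale mlr_section =
  fixes f g :: "real \<Rightarrow> real" and p :: real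
  assumes p: "0 < p" "p < 1"
    and f_pos: "\<And>x. 0 < f x" and g_pos: "\<And>x. 0 < g x"
    and f_int: "integrable lborel f" and g_int: "integrable lborel g"
    and ratio_cont: "continuous_on UNIV (\<lambda>x. f x / g x)"
    and ratio_mono: "strict_mono (\<lambda>x. f x / g x)"
    and ratio_inf: "(INF x. f x / g x) = 0"
    and ratio_unbounded: "\<not> bdd_above (range (\<lambda>x. f x / g x))"
begin

lemma ratio_less_iff: "f a / g a < f b / g b \<longleftrightarrow> a < b"
  using strict_mono_less[OF ratio_mono] .

lemma ratio_surj:
  assumes "0 < y" shows "\<exists>x. f x / g x = y"
proof -
  have "bdd_below (range (\<lambda>x. f x / g x))"
    using f_pos g_pos by (intro bdd_belowI2[of _ 0]) (simp add: less_imp_le)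
  then obtain x\<^sub>1 where "f x\<^sub>1 / g x\<^sub>1 < y"
    using cINF_less_iff[of UNIV "\<lambda>x. f x / g x" y] ratio_inf assms by auto
  moreover obtain x\<^sub>2 where "y < f x\<^sub>2 / g x\<^sub>2"
    using ratio_unbounded by (meson bdd_aboveI2 not_le)
  ultimately show ?thesis
    using continuous_on_UNIV_attains[OF ratio_cont, of x\<^sub>1 y x\<^sub>2] by auto
qed

lemma ratio_at_top: "filterlim (\<lambda>x. f x / g x) at_top at_top"
  unfolding filterlim_at_top
proof
  fix Z
  obtain a where "Z < f a / g a"
    using ratio_unbounded by (meson bdd_aboveI2 not_le)
  then show "\<forall>\<^sub>F x in at_top. Z \<le> f x / g x"
    unfolding eventually_at_top_linorder
    using strict_mono_less_eq[OF ratio_mono] by (meson less_imp_le order.trans)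
qed

lemma integrable_indicator_mult:
  "S \<in> sets borel \<Longrightarrow> integrable lborel (\<lambda>x. indicator S x * f x)"
  "S \<in> sets borel \<Longrightarrow> integrable lborel (\<lambda>x. indicator S x * g x)"
  using integrable_mult_indicator[OF _ f_int, of S] integrable_mult_indicator[OF _ g_int, of S] by simp_all

lemma integral_Ioc_le_ratio:
  "(\<integral>x. indicator {a<..b} x * f x \<partial>lborel) \<le> f b / g b * (\<integral>x. indicator {a<..b} x * g x \<partial>lborel)"
proof -
  have "indicator {a<..b} x * f x \<le> f b / g b * (indicator {a<..b} x * g x)" for x
  proof (cases "x \<in> {a<..b}")
    case True
    then have "f x / g x \<le> f b / g b"
      using ratio_less_iff[of x b] by (cases "x = b") auto
    then show ?thesis
      using True g_pos[of x] by (simp add: pos_divide_le_eq)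
  qed simp
  then show ?thesis
    by (subst integral_mult_right_zero[symmetric])
      (intro integral_mono integrable_indicator_mult integrable_mult_right; simp)
qed

lemma ratio_mult_upper_tail_less: "f b / g b * upper_tail g b < upper_tail f b"
proof -
  let ?h = "\<lambda>x. indicator {b<..} x * f x - f b / g b * (indicator {b<..} x * g x)"
  have h_pos: "0 < ?h x" if "b < x" for x
    using that ratio_less_iff[of b x] g_pos[of x] by (simp add: pos_less_divide_eq)
  have "0 < integral\<^sup>L lborel ?h"
  proof (rule integral_pos_if_pos_on[where S = "{b<..}"])
    show "0 \<le> ?h x" for x
      using h_pos[of x] by (cases "b < x") auto
    have "emeasure lborel {b<..b + 1} \<le> emeasure lborel {b<..}"
      by (intro emeasure_mono) auto
    then show "emeasure lborel {b<..} \<noteq> 0"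
      by auto
    show "integrable lborel ?h"
      by (intro Bochner_Integration.integrable_diff Bochner_Integration.integrable_mult_right
          integrable_indicator_mult) auto
  qed (use h_pos in auto)
  also have "integral\<^sup>L lborel ?h = upper_tail f b - f b / g b * upper_tail g b"
    unfolding upper_tail_def by (simp add: integrable_indicator_mult)
  finally show ?thesis by simp
qed

lemma upper_tail_ratio_strict_mono:
  assumes "a < b"
  shows "upper_tail g b * upper_tail f a < upper_tail g a * upper_tail f b"
proof -
  define F where "F = (\<integral>x. indicator {a<..b} x * f x \<partial>lborel)"
  define G where "G = (\<integral>x. indicator {a<..b} x * g x \<partial>lborel)"
  have "upper_tail f a = upper_tail f b + F" "upper_tail g a = upper_tail g b + G"
    unfolding F_def G_def using upper_tail_split f_int g_int assms by auto
  moreover have "upper_tail g b * F < G * upper_tail f b"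
  proof -
    have "F * (f b / g b * upper_tail g b) < F * upper_tail f b"
      using ratio_mult_upper_tail_less[of b] integral_Ioc_pos[OF f_int f_pos assms] unfolding F_def
      by (rule mult_strict_left_mono)
    also have "\<dots> \<le> f b / g b * G * upper_tail f b"
      unfolding F_def G_def
      by (intro mult_right_mono integral_Ioc_le_ratio less_imp_le[OF upper_tail_pos[OF f_int f_pos]])
    finally have "f b / g b * (upper_tail g b * F) < f b / g b * (G * upper_tail f b)"
      by (simp add: algebra_simps)
    then show ?thesis
      using divide_pos_pos[OF f_pos g_pos, of b b] mult_less_cancel_left_pos by blast
  qed
  ultimately show ?thesis
    by (simp add: algebra_simps)
qed

lemma upper_tail_quotient_at_top: "((\<lambda>a. upper_tail g a / upper_tail f a) \<longlongrightarrow> 0) at_top"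
proof (rule tendsto_sandwich)
  show "\<forall>\<^sub>F a in at_top. 0 \<le> upper_tail g a / upper_tail f a"
    using upper_tail_pos[OF f_int f_pos] upper_tail_pos[OF g_int g_pos] by (simp add: less_imp_le)
  show "\<forall>\<^sub>F a in at_top. upper_tail g a / upper_tail f a \<le> inverse (f a / g a)"
    using ratio_mult_upper_tail_less upper_tail_pos[OF f_int f_pos] f_pos g_pos
    by (intro always_eventually allI) (simp add: field_simps less_imp_le)
  show "((\<lambda>a. inverse (f a / g a)) \<longlongrightarrow> 0) at_top"
    by (rule tendsto_inverse_0_at_top[OF ratio_at_top])
qed simp

definition s1_cut :: "real \<Rightarrow> real" where
  "s1_cut a = p * upper_tail f a / (p * upper_tail f a + (1 - p) * upper_tail g a)"

definition s2_cut :: "real \<Rightarrow> real" where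
  "s2_cut a = (p * upper_tail f a + (1 - p) * upper_tail g a)
    / (p * integral\<^sup>L lborel f + (1 - p) * integral\<^sup>L lborel g)"

definition phi_section :: real where
  "phi_section = p * integral\<^sup>L lborel f / (p * integral\<^sup>L lborel f + (1 - p) * integral\<^sup>L lborel g)"

lemma mixed_upper_tail_pos: "0 < p * upper_tail f a + (1 - p) * upper_tail g a"
  using p upper_tail_pos[OF f_int f_pos] upper_tail_pos[OF g_int g_pos] by (simp add: add_pos_pos)

lemma mixed_integral_pos: "0 < p * integral\<^sup>L lborel f + (1 - p) * integral\<^sup>L lborel g"
  using p integral_pos[OF f_int f_pos] integral_pos[OF g_int g_pos] by (simp add: add_pos_pos)

lemmas mixed_neq_0 [simp] =
  mixed_upper_tail_pos[THEN less_imp_neq, THEN not_sym] mixed_integral_pos[THEN less_imp_neq, THEN not_sym]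

lemma s1_cut_strict_mono: "strict_mono s1_cut"
proof
  fix a b :: real assume "a < b"
  then have "p * (1 - p) * (upper_tail g b * upper_tail f a) < p * (1 - p) * (upper_tail g a * upper_tail f b)"
    using upper_tail_ratio_strict_mono p by simp
  then show "s1_cut a < s1_cut b"
    unfolding s1_cut_def using mixed_upper_tail_pos[of a] mixed_upper_tail_pos[of b]
    by (simp add: divide_simps algebra_simps)
qed

lemma s2_cut_strict_antimono: "a < b \<Longrightarrow> s2_cut b < s2_cut a"
  unfolding s2_cut_def using mixed_integral_pos p
    upper_tail_strict_antimono[OF f_int f_pos] upper_tail_strict_antimono[OF g_int g_pos]
  by (intro divide_strict_right_mono add_strict_mono mult_strict_left_mono) auto

lemma continuous_on_s1_cut: "continuous_on UNIV s1_cut"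
  unfolding s1_cut_def[abs_def] using isCont_upper_tail[OF f_int] isCont_upper_tail[OF g_int] f_pos g_pos
  by (intro continuous_at_imp_continuous_on ballI continuous_intros) (auto simp: less_imp_le)

lemma continuous_on_s2_cut: "continuous_on UNIV s2_cut"
  unfolding s2_cut_def[abs_def] using isCont_upper_tail[OF f_int] isCont_upper_tail[OF g_int] f_pos g_pos
  by (intro continuous_at_imp_continuous_on ballI continuous_intros) (auto simp: less_imp_le)

lemma s1_cut_at_bot: "(s1_cut \<longlongrightarrow> phi_section) at_bot"
  unfolding s1_cut_def[abs_def] phi_section_def using f_pos g_pos
  by (intro tendsto_intros upper_tail_at_bot f_int g_int) (auto simp: less_imp_le)

lemma s2_cut_at_bot: "(s2_cut \<longlongrightarrow> 1) at_bot"
proof -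
  have "(s2_cut \<longlongrightarrow> (p * integral\<^sup>L lborel f + (1 - p) * integral\<^sup>L lborel g)
      / (p * integral\<^sup>L lborel f + (1 - p) * integral\<^sup>L lborel g)) at_bot"
    unfolding s2_cut_def[abs_def] using f_pos g_pos
    by (intro tendsto_intros upper_tail_at_bot f_int g_int) (auto simp: less_imp_le)
  then show ?thesis
    by simp
qed

lemma s2_cut_at_top: "(s2_cut \<longlongrightarrow> 0) at_top"
proof -
  have "(s2_cut \<longlongrightarrow> (p * 0 + (1 - p) * 0)
      / (p * integral\<^sup>L lborel f + (1 - p) * integral\<^sup>L lborel g)) at_top"
    unfolding s2_cut_def[abs_def] using f_pos g_pos
    by (intro tendsto_intros upper_tail_at_top f_int g_int) (auto simp: less_imp_le)
  then show ?thesis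
    by simp
qed

lemma s1_cut_eq_quotient: "s1_cut a = p / (p + (1 - p) * (upper_tail g a / upper_tail f a))"
  unfolding s1_cut_def using upper_tail_pos[OF f_int f_pos, of a] by (simp add: field_simps)

lemma s1_cut_at_top: "(s1_cut \<longlongrightarrow> 1) at_top"
proof -
  have "(s1_cut \<longlongrightarrow> p / (p + (1 - p) * 0)) at_top"
    unfolding s1_cut_eq_quotient[abs_def] using p
    by (intro tendsto_intros upper_tail_quotient_at_top) auto
  then show ?thesis
    using p by simp
qed

lemma phi_section_less_1: "phi_section < 1"
  unfolding phi_section_def using mixed_integral_pos p integral_pos[OF g_int g_pos]
  by (simp add: divide_less_eq)

lemma s1_cut_attains: "phi_section < \<beta> \<Longrightarrow> \<beta> < 1 \<Longrightarrow> \<exists>a. s1_cut a = \<beta>"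
  by (rule continuous_on_UNIV_attains_between_limits[OF continuous_on_s1_cut s1_cut_at_bot s1_cut_at_top])
    auto

lemma s2_cut_attains: "0 < \<beta> \<Longrightarrow> \<beta> < 1 \<Longrightarrow> \<exists>a. s2_cut a = \<beta>"
  by (rule continuous_on_UNIV_attains_between_limits[OF continuous_on_s2_cut s2_cut_at_bot s2_cut_at_top])
    auto

lemma s1_cut_meets_s2_cut: "\<exists>a. s1_cut a = s2_cut a"
proof -
  have "\<exists>a. s2_cut a - s1_cut a = 0"
    using continuous_on_s1_cut continuous_on_s2_cut phi_section_less_1
    by (intro continuous_on_UNIV_attains_between_limits[where l = "1 - phi_section" and m = "0 - 1"]
        continuous_intros tendsto_intros s1_cut_at_bot s1_cut_at_top s2_cut_at_bot s2_cut_at_top) auto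
  then show ?thesis
    by (metis eq_iff_diff_eq_0)
qed

end

lemma thr_pos: "0 < p \<Longrightarrow> p < 1 \<Longrightarrow> \<tau> \<in> {-xu<..<xq} \<Longrightarrow> 0 < thr p xq xu \<tau>"
  unfolding thr_def by (auto intro!: divide_pos_pos mult_pos_pos)

lemma thr_strict_mono_on:
  assumes "0 < p" "p < 1"
  shows "strict_mono_on {-xu<..<xq} (thr p xq xu)"
proof (rule strict_mono_onI)
  fix \<tau> \<tau>' assume "\<tau> \<in> {-xu<..<xq}" "\<tau>' \<in> {-xu<..<xq}" "\<tau> < \<tau>'"
  moreover have "(xu + \<tau>') * (xq - \<tau>) - (xu + \<tau>) * (xq - \<tau>') = (\<tau>' - \<tau>) * (xq + xu)"
    by (simp add: algebra_simps)
  ultimately have "(xu + \<tau>) / (xq - \<tau>) < (xu + \<tau>') / (xq - \<tau>')"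
    by (simp add: divide_simps) (smt (verit) mult_pos_pos)
  moreover have thr_eq: "thr p xq xu t = (1 - p) / p * ((xu + t) / (xq - t))" for t
    by (simp add: thr_def)
  ultimately show "thr p xq xu \<tau> < thr p xq xu \<tau>'"
    unfolding thr_eq using assms by (intro mult_strict_left_mono) auto
qed

lemma thr_surj:
  assumes "0 < p" "p < 1" "-xu < xq" "0 < l"
  shows "\<exists>\<tau>\<in>{-xu<..<xq}. thr p xq xu \<tau> = l"
proof
  define X where "X = xq + xu"
  define D where "D = (1 - p) + l * p"
  define \<tau> where "\<tau> = (l * p * xq - (1 - p) * xu) / D"
  have X: "0 < X" and D: "0 < D"
    unfolding X_def D_def using assms by (simp_all add: add_pos_pos)
  have lower: "xu + \<tau> = l * p * X / D" and upper: "xq - \<tau> = (1 - p) * X / D"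
    unfolding \<tau>_def X_def using D by (simp_all add: field_simps D_def)
  have "0 < xu + \<tau>" "0 < xq - \<tau>"
    unfolding lower upper using assms X D by simp_all
  then show "\<tau> \<in> {-xu<..<xq}"
    by simp
  have "thr p xq xu \<tau> = (1 - p) * (l * p * X / D) / (p * ((1 - p) * X / D))"
    unfolding thr_def lower upper ..
  also have "\<dots> = l"
    using assms X D by (simp add: field_simps)
  finally show "thr p xq xu \<tau> = l" .
qed

locale mlr_screening = mlr_section "hq \<theta>" "hu \<theta>" p
  for hq hu :: "real \<Rightarrow> real \<Rightarrow> real" and \<theta> p xq xu :: real +
  assumes payoff_range: "-xu < xq"
begin

lemma accSet_eq_Ioi:
  assumes "hq \<theta> a / hu \<theta> a = thr p xq xu \<tau>"
  shows "accSet hq hu p xq xu \<theta> \<tau> = {a<..}"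
  unfolding accSet_def lr_def assms[symmetric] ratio_less_iff by auto

lemma s1_eq_s1_cut: "accSet hq hu p xq xu \<theta> \<tau> = {a<..} \<Longrightarrow> s1 hq hu p xq xu \<theta> \<tau> = s1_cut a"
  unfolding s1_def s1_cut_def secm_def upper_tail_def Let_def by simp

lemma s2_eq_s2_cut: "accSet hq hu p xq xu \<theta> \<tau> = {a<..} \<Longrightarrow> s2 hq hu p xq xu \<theta> \<tau> = s2_cut a"
  unfolding s2_def s2_cut_def secm_def upper_tail_def Let_def by simp

lemma phi_eq_phi_section: "phi hq hu p \<theta> = phi_section"
  unfolding phi_def phi_section_def secm_def by simp

lemma threshold_of_cut: "\<exists>\<tau>\<in>{-xu<..<xq}. accSet hq hu p xq xu \<theta> \<tau> = {a<..}"
  using thr_surj[OF p payoff_range divide_pos_pos[OF f_pos g_pos]] accSet_eq_Ioi by metis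

lemma cuts_of_thresholds:
  assumes "\<tau> \<in> {-xu<..<xq}" "\<tau>' \<in> {-xu<..<xq}" "\<tau> < \<tau>'"
  obtains a a' where "a < a'"
    "accSet hq hu p xq xu \<theta> \<tau> = {a<..}" "accSet hq hu p xq xu \<theta> \<tau>' = {a'<..}"
proof -
  obtain a a' where a: "hq \<theta> a / hu \<theta> a = thr p xq xu \<tau>"
    and a': "hq \<theta> a' / hu \<theta> a' = thr p xq xu \<tau>'"
    using ratio_surj thr_pos[OF p] assms(1,2) by metis
  have "a < a'"
    using strict_mono_onD[OF thr_strict_mono_on[OF p] assms] unfolding a[symmetric] a'[symmetric] ratio_less_iff .
  then show thesis
    using accSet_eq_Ioi[OF a] accSet_eq_Ioi[OF a'] by (rule that)
qed

lemma s1_strict_mono_on: "strict_mono_on {-xu<..<xq} (s1 hq hu p xq xu \<theta>)"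
proof (rule strict_mono_onI)
  fix \<tau> \<tau>' assume "\<tau> \<in> {-xu<..<xq}" "\<tau>' \<in> {-xu<..<xq}" "\<tau> < \<tau>'"
  then show "s1 hq hu p xq xu \<theta> \<tau> < s1 hq hu p xq xu \<theta> \<tau>'"
    by (rule cuts_of_thresholds) (simp add: s1_eq_s1_cut strict_monoD[OF s1_cut_strict_mono])
qed

lemma s2_strict_antimono_on: "strict_antimono_on {-xu<..<xq} (s2 hq hu p xq xu \<theta>)"
proof (rule monotone_onI)
  fix \<tau> \<tau>' assume "\<tau> \<in> {-xu<..<xq}" "\<tau>' \<in> {-xu<..<xq}" "\<tau> < \<tau>'"
  then show "s2 hq hu p xq xu \<theta> \<tau>' < s2 hq hu p xq xu \<theta> \<tau>"
    by (rule cuts_of_thresholds) (simp add: s2_eq_s2_cut s2_cut_strict_antimono)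
qed

lemma s1_attains: "phi hq hu p \<theta> < \<beta> \<Longrightarrow> \<beta> < 1 \<Longrightarrow> \<exists>\<tau>\<in>{-xu<..<xq}. s1 hq hu p xq xu \<theta> \<tau> = \<beta>"
  using s1_cut_attains threshold_of_cut s1_eq_s1_cut by (metis phi_eq_phi_section)

lemma s2_attains: "0 < \<beta> \<Longrightarrow> \<beta> < 1 \<Longrightarrow> \<exists>\<tau>\<in>{-xu<..<xq}. s2 hq hu p xq xu \<theta> \<tau> = \<beta>"
  using s2_cut_attains threshold_of_cut s2_eq_s2_cut by metis

lemma s1_meets_s2: "\<exists>\<tau>\<in>{-xu<..<xq}. s1 hq hu p xq xu \<theta> \<tau> = s2 hq hu p xq xu \<theta> \<tau>"
  using s1_cut_meets_s2_cut threshold_of_cut s1_eq_s1_cut s2_eq_s2_cut by metis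

end

theorem mainTheorem10:
  fixes hq hu :: "real \<Rightarrow> real \<Rightarrow> real" and p xq xu c \<beta> \<theta> :: real
  assumes p: "0 < p" "p < 1"
    and hq_pos: "\<And>t g. hq t g > 0" and hu_pos: "\<And>t g. hu t g > 0"
    and hq_dens: "integrable lborel (\<lambda>(t, g). hq t g)" "(\<integral>x. (case x of (t, g) \<Rightarrow> hq t g) \<partial>lborel) = 1"
    and hu_dens: "integrable lborel (\<lambda>(t, g). hu t g)" "(\<integral>x. (case x of (t, g) \<Rightarrow> hu t g) \<partial>lborel) = 1"
    and hq_sec: "\<And>t. integrable lborel (hq t)" and hu_sec: "\<And>t. integrable lborel (hu t)"
    and l_cont: "continuous_on UNIV (\<lambda>(t, g). lr hq hu t g)"
    and l_mono1: "\<And>g. strict_mono (\<lambda>t. lr hq hu t g)"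
    and l_mono2: "\<And>t. strict_mono (\<lambda>g. lr hq hu t g)"
    and l_inf: "\<And>t. (INF g. lr hq hu t g) = 0"
    and l_sup: "\<And>t. \<not> bdd_above (range (\<lambda>g. lr hq hu t g))"
    and xq: "xq > 0" and xu: "xu > 0"
    and c: "-xu < c" "c < xq"
    and beta: "\<beta> = (xu + c) / (xq + xu)"
    and phi_lt: "phi hq hu p \<theta> < \<beta>"
  shows "(s1 hq hu p xq xu \<theta> (tau_star hq hu p xq xu \<theta>) < \<beta> \<longleftrightarrow>
            tau_d1 hq hu p xq xu \<beta> \<theta> > tau_d2 hq hu p xq xu \<beta> \<theta>)
       \<and> (s1 hq hu p xq xu \<theta> (tau_star hq hu p xq xu \<theta>) > \<beta> \<longleftrightarrow>
            tau_d1 hq hu p xq xu \<beta> \<theta> < tau_d2 hq hu p xq xu \<beta> \<theta>)"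
proof -
  interpret mlr_screening hq hu \<theta> p xq xu
  proof
    show "continuous_on UNIV (\<lambda>x. hq \<theta> x / hu \<theta> x)"
      using continuous_on_section[OF l_cont, of \<theta>] by (simp add: lr_def[abs_def])
  qed (use p hq_pos hu_pos hq_sec hu_sec l_mono2 l_inf l_sup c in \<open>simp_all add: lr_def\<close>)
  have "0 < \<beta>" "\<beta> < 1"
    unfolding beta using c by (simp_all add: divide_simps)
  then show ?thesis
    unfolding tau_star_def tau_d1_def tau_d2_def
    using strict_mono_antimono_crossing[OF s1_strict_mono_on s2_strict_antimono_on
        s1_meets_s2 s1_attains[OF phi_lt] s2_attains]
    by simp
qed

end
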